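(* Let $\hbar^2\ll\varepsilon_\hbar\ll\hbar$. Let $\Lambda_0\in\mathcal{L}_1$ and let $k=k(\hbar)=n(\hbar)\vec v_{\Lambda_0}+m(\hbar)\vec v_{\Lambda_0}^\perp\in\mathbb{Z}^2$ (with $n(\hbar),m(\hbar)$ integers), along a sequence with $\|k\|\to\infty$, $\hbar=\|k\|^{-1}$ and $|m(\hbar)|\ll1/\hbar$; set $\psi_\hbar=e_k$. For $\Lambda\in\mathcal{L}_1$ let $\mathbf{F}^0_\Lambda$ denote the limit (as $\hbar\to0$) of the distributions $a\mapsto\langle\psi_\hbar,\operatorname{Op}_\hbar(\mathcal{I}_\Lambda(a)(x,\hbar H_\Lambda(\xi)/\varepsilon_\hbar))\psi_\hbar\rangle$ on $\mathcal{C}^\infty_c(\mathbb{T}^2\times\mathbb{R})$. Then: (1) if $2\pi m(\hbar)\hbar^2\varepsilon_\hbar^{-1}\to\omega\in\mathbb{R}$, then $\mathbf{F}^0_\Lambda=dx\otimes\delta_{\omega L_{\Lambda_0}}(\eta)$ if $\Lambda=\mathbb{Z}\vec v_{\Lambda_0}^\perp$, and $\mathbf{F}^0_\Lambda=0$ otherwise; (2) if $2\pi|m(\hbar)|\hbar^2\varepsilon_\hbar^{-1}\to+\infty$, then $\mathbf{F}^0_\Lambda=0$ for all $\Lambda\in\mathcal{L}_1$.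
   Context: $\mathbb{T}^2=\mathbb{R}^2/\mathbb{Z}^2$, $e_k(x)=e^{2i\pi k\cdot x}$, $\langle u,v\rangle=\int\overline{u}v$. Standard quantization: $\operatorname{Op}_\hbar(a)e_k=a(x,2\pi\hbar k)e_k$ for symbols $a(x,\xi)$ periodic in $x$. $\mathcal{L}_1$: primitive rank-one sublattices $\Lambda=\mathbb{Z}\vec v_\Lambda$ of $\mathbb{Z}^2$, with a fixed generator $\vec v_\Lambda$; $\vec v_\Lambda^\perp$ is $\vec v_\Lambda$ rotated by $+\pi/2$; $L_\Lambda=\|\vec v_\Lambda\|$; $H_\Lambda(\xi)=\langle\xi,\vec v_\Lambda\rangle/L_\Lambda$; $\mathcal{I}_\Lambda(a)(x,\eta)=\frac1{L_\Lambda}\int_0^{L_\Lambda}a(x+t\vec v_\Lambda^\perp/L_\Lambda,\eta)dt$. For the lattice $\Lambda=\mathbb{Z}\vec v_{\Lambda_0}^\perp$ the generator is taken to be $\vec v_\Lambda=\vec v_{\Lambda_0}^\perp$. $dx$ is Lebesgue measure on $\mathbb{T}^2$. *)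

theory Defs
  imports "HOL-Analysis.Analysis"
begin

text \<open>Points of the torus are represented by points of R^2 (type real^2); functions on the
torus are functions on R^2 that are Z^2-periodic. Integration over the torus is integration
over the fundamental domain [0,1]^2 = cbox 0 1.\<close>

definition int_vec :: "real^2 \<Rightarrow> bool" where
  "int_vec z \<longleftrightarrow> (\<forall>i. z $ i \<in> \<int>)"

text \<open>Primitive vectors of Z^2: these are exactly the generators of rank-one primitive
sublattices of Z^2.\<close>
definition primitive_vec :: "real^2 \<Rightarrow> bool" where
  "primitive_vec v \<longleftrightarrow> (\<exists>p q :: int. v = (\<chi> i. if i = 1 then of_int p else of_int q) \<and> coprime p q)"

definition perp :: "real^2 \<Rightarrow> real^2" where
  "perp v = (\<chi> i. if i = 1 then - (v $ 2) else v $ 1)"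

definition ek :: "real^2 \<Rightarrow> real^2 \<Rightarrow> complex" where
  "ek k x = cis (2 * pi * (k \<bullet> x))"

text \<open>Standard quantization applied to the exponential e_k:
  Op_h(b) e_k = b(x, 2 pi h k) e_k.\<close>
definition Op_on_ek :: "real \<Rightarrow> (real^2 \<Rightarrow> real^2 \<Rightarrow> complex) \<Rightarrow> real^2 \<Rightarrow> (real^2 \<Rightarrow> complex)" where
  "Op_on_ek h b k = (\<lambda>x. b x ((2 * pi * h) *\<^sub>R k) * ek k x)"

definition torus_inner :: "(real^2 \<Rightarrow> complex) \<Rightarrow> (real^2 \<Rightarrow> complex) \<Rightarrow> complex" where
  "torus_inner u v = integral (cbox 0 1) (\<lambda>x. cnj (u x) * v x)"

definition H_lat :: "real^2 \<Rightarrow> real^2 \<Rightarrow> real" where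
  "H_lat v \<xi> = (\<xi> \<bullet> v) / norm v"

definition I_lat :: "real^2 \<Rightarrow> (real^2 \<Rightarrow> real \<Rightarrow> complex) \<Rightarrow> real^2 \<Rightarrow> real \<Rightarrow> complex" where
  "I_lat v a x \<eta> = (1 / complex_of_real (norm v)) *
      integral {0..norm v} (\<lambda>t. a (x + (t / norm v) *\<^sub>R perp v) \<eta>)"

text \<open>Iterated directional derivatives; a function is C^infinity iff all iterated
directional derivatives exist and are continuous.\<close>
fun dderiv :: "'a::real_normed_vector list \<Rightarrow> ('a \<Rightarrow> 'b::real_normed_vector) \<Rightarrow> 'a \<Rightarrow> 'b" where
  "dderiv [] f = f"
| "dderiv (d # ds) f = (\<lambda>x. vector_derivative (\<lambda>t. dderiv ds f (x + t *\<^sub>R d)) (at 0))"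

definition smooth_fun :: "('a::real_normed_vector \<Rightarrow> 'b::real_normed_vector) \<Rightarrow> bool" where
  "smooth_fun f \<longleftrightarrow> (\<forall>ds. continuous_on UNIV (dderiv ds f) \<and>
      (\<forall>d x. ((\<lambda>t. dderiv ds f (x + t *\<^sub>R d)) has_vector_derivative dderiv (d # ds) f x) (at 0)))"

text \<open>Test functions C_c^infinity(T^2 x R): smooth, Z^2-periodic in x, compactly supported in eta.\<close>
definition test_fun :: "(real^2 \<Rightarrow> real \<Rightarrow> complex) \<Rightarrow> bool" where
  "test_fun a \<longleftrightarrow> smooth_fun (\<lambda>(x, \<eta>). a x \<eta>) \<and>
      (\<forall>x z \<eta>. int_vec z \<longrightarrow> a (x + z) \<eta> = a x \<eta>) \<and>
      (\<exists>R. \<forall>x \<eta>. \<bar>\<eta>\<bar> > R \<longrightarrow> a x \<eta> = 0)"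

text \<open>The pairing  a |-> < psi_h , Op_h( I_Lambda(a)(x, h H_Lambda(xi)/eps) ) psi_h >
  with psi_h = e_k, for the lattice generated by v.\<close>
definition pairing :: "real^2 \<Rightarrow> real \<Rightarrow> real \<Rightarrow> real^2 \<Rightarrow> (real^2 \<Rightarrow> real \<Rightarrow> complex) \<Rightarrow> complex" where
  "pairing v h \<epsilon> k a =
     torus_inner (ek k) (Op_on_ek h (\<lambda>x \<xi>. I_lat v a x (h * H_lat v \<xi> / \<epsilon>)) k)"

end

theory Submission
  imports Defs
begin

text \<open>Since \<open>Op\<^sub>h\<close> acts diagonally on \<open>e\<^sub>k\<close>, the pairing is the torus integral of
  \<open>I\<^sub>\<Lambda>(a)(x, \<eta>)\<close> at the single frequency \<open>\<eta> = 2\<pi> h\<^sup>2 \<langle>k, v\<rangle> / (\<epsilon> |v|)\<close>.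
  Averaging along a line and integrating over the torus is the same as integrating over the
  torus, so for \<open>v = v\<^sub>0\<^sup>\<perp>\<close>, where \<open>\<eta> = 2\<pi> m h\<^sup>2 |v\<^sub>0| / \<epsilon>\<close>, the pairing converges by
  continuity of \<open>a\<close>. Otherwise \<open>m h \<rightarrow> 0\<close> forces \<open>k/|k|\<close> to align with \<open>\<plusminus>v\<^sub>0/|v\<^sub>0|\<close>, so
  \<open>|\<langle>k/|k|, v\<rangle>|\<close> stays away from 0 when \<open>\<langle>v\<^sub>0, v\<rangle> \<noteq> 0\<close>; as \<open>h/\<epsilon> \<rightarrow> \<infinity>\<close> the frequency escapes
  the compact \<open>\<eta>\<close>-support of \<open>a\<close> and the pairing is eventually 0.\<close>

lemma inner_vec2: "(x::real^2) \<bullet> y = x$1 * y$1 + x$2 * y$2"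
  by (simp add: inner_vec_def sum_2)

lemma perp_nth [simp]: "perp v $ 1 = - v$2" "perp v $ 2 = v$1"
  by (simp_all add: perp_def)

lemma inner_perp [simp]: "v \<bullet> perp v = 0" "perp v \<bullet> v = 0" "perp u \<bullet> perp v = u \<bullet> v"
  by (simp_all add: inner_vec2 algebra_simps)

lemma norm_perp [simp]: "norm (perp v) = norm v"
  by (simp add: norm_eq_sqrt_inner)

lemma perp_eq_0_iff [simp]: "perp v = 0 \<longleftrightarrow> v = 0"
  by (metis norm_eq_zero norm_perp)

lemma inner_sq_add_inner_perp_sq: "(u \<bullet> v)\<^sup>2 + (u \<bullet> perp v)\<^sup>2 = (u \<bullet> u) * (v \<bullet> v)"
  by (simp add: inner_vec2 power2_eq_square algebra_simps)

lemma inner_in_perp_basis: "(v \<bullet> v) * (u \<bullet> w) = (u \<bullet> v) * (v \<bullet> w) + (u \<bullet> perp v) * (perp v \<bullet> w)"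
  by (simp add: inner_vec2 algebra_simps)

lemma primitive_vec_nonzero: "primitive_vec v \<Longrightarrow> v \<noteq> 0"
  by (auto simp: primitive_vec_def vec_eq_iff forall_2)

lemma coprime_orthogonal_int:
  fixes p q a b :: int
  assumes pq: "coprime p q" and ab: "coprime a b" and orth: "p * a + q * b = 0"
  shows "(a = -q \<and> b = p) \<or> (a = q \<and> b = -p)"
proof -
  have pa: "p * a = - (q * b)" and qb: "q * b = - (p * a)"
    using orth by simp_all
  have "p dvd b"
    using pq qb by (metis coprime_dvd_mult_right_iff dvd_minus_iff dvd_triv_left)
  moreover have "b dvd p"
    using ab pa by (metis coprime_commute coprime_dvd_mult_left_iff dvd_minus_iff dvd_triv_right)
  moreover have "q dvd a"
    using pq pa by (metis coprime_commute coprime_dvd_mult_right_iff dvd_minus_iff dvd_triv_left)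
  moreover have "a dvd q"
    using ab qb by (metis coprime_dvd_mult_left_iff dvd_minus_iff dvd_triv_right)
  ultimately have "\<bar>b\<bar> = \<bar>p\<bar>" "\<bar>a\<bar> = \<bar>q\<bar>"
    using zdvd_antisym_abs by blast+
  then have "b = p \<or> b = -p" "a = q \<or> a = -q"
    by arith+
  then show ?thesis
    using orth by (auto simp: algebra_simps)
qed

lemma primitive_vec_orthogonal:
  assumes u: "primitive_vec u" and v: "primitive_vec v" and orth: "u \<bullet> v = 0"
  shows "v = perp u \<or> v = - perp u"
proof -
  obtain p q :: int where u_eq: "u$1 = p" "u$2 = q" and "coprime p q"
    using u by (auto simp: primitive_vec_def)
  obtain a b :: int where v_eq: "v$1 = a" "v$2 = b" and "coprime a b"
    using v by (auto simp: primitive_vec_def)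
  have "real_of_int (p * a + q * b) = 0"
    using orth by (simp add: inner_vec2 u_eq v_eq)
  then have "p * a + q * b = 0"
    by linarith
  with coprime_orthogonal_int[OF \<open>coprime p q\<close> \<open>coprime a b\<close>] show ?thesis
    by (auto simp: vec_eq_iff forall_2 u_eq v_eq)
qed

lemma tendsto_abs_inner_aligned_unit:
  fixes u :: "nat \<Rightarrow> real^2"
  assumes unit: "eventually (\<lambda>j. norm (u j) = 1) sequentially" and v: "v \<noteq> 0"
    and aligned: "(\<lambda>j. u j \<bullet> perp v) \<longlonglongrightarrow> 0"
  shows "(\<lambda>j. \<bar>u j \<bullet> w\<bar>) \<longlonglongrightarrow> \<bar>v \<bullet> w\<bar> / norm v"
proof -
  have vv: "v \<bullet> v = (norm v)\<^sup>2"
    by (simp add: power2_norm_eq_inner)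
  have "eventually (\<lambda>j. \<bar>u j \<bullet> v\<bar> = sqrt ((norm v)\<^sup>2 - (u j \<bullet> perp v)\<^sup>2)) sequentially"
    using unit
  proof eventually_elim
    case (elim j)
    then have "u j \<bullet> u j = 1"
      by (simp add: power2_norm_eq_inner [symmetric])
    then show ?case
      using inner_sq_add_inner_perp_sq[of "u j" v] by (simp add: vv flip: real_sqrt_abs)
  qed
  moreover have "(\<lambda>j. sqrt ((norm v)\<^sup>2 - (u j \<bullet> perp v)\<^sup>2)) \<longlonglongrightarrow> sqrt ((norm v)\<^sup>2 - 0\<^sup>2)"
    by (intro tendsto_intros aligned)
  ultimately have along: "(\<lambda>j. \<bar>u j \<bullet> v\<bar>) \<longlonglongrightarrow> norm v"
    by (simp add: tendsto_cong)
  define A B where "A j = (u j \<bullet> v) * (v \<bullet> w) / (norm v)\<^sup>2"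
    and "B j = (u j \<bullet> perp v) * (perp v \<bullet> w) / (norm v)\<^sup>2" for j
  have split: "u j \<bullet> w = A j + B j" for j
    using inner_in_perp_basis[of v "u j" w] v by (simp add: A_def B_def vv field_simps)
  have "(\<lambda>j. \<bar>A j\<bar>) \<longlonglongrightarrow> norm v * \<bar>v \<bullet> w\<bar> / (norm v)\<^sup>2"
    unfolding A_def abs_divide abs_mult by (intro tendsto_intros along) (simp_all add: v)
  then have A: "(\<lambda>j. \<bar>A j\<bar>) \<longlonglongrightarrow> \<bar>v \<bullet> w\<bar> / norm v"
    using v by (simp add: power2_eq_square)
  have B: "(\<lambda>j. \<bar>B j\<bar>) \<longlonglongrightarrow> 0"
    unfolding B_def using tendsto_rabs_zero[OF tendsto_divide_zero[OF tendsto_mult_left_zero[OF aligned]]] .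
  show ?thesis
  proof (rule tendsto_sandwich)
    show "eventually (\<lambda>j. \<bar>A j\<bar> - \<bar>B j\<bar> \<le> \<bar>u j \<bullet> w\<bar>) sequentially"
      "eventually (\<lambda>j. \<bar>u j \<bullet> w\<bar> \<le> \<bar>A j\<bar> + \<bar>B j\<bar>) sequentially"
      by (intro always_eventually allI; unfold split; arith)+
    show "(\<lambda>j. \<bar>A j\<bar> - \<bar>B j\<bar>) \<longlonglongrightarrow> \<bar>v \<bullet> w\<bar> / norm v"
      "(\<lambda>j. \<bar>A j\<bar> + \<bar>B j\<bar>) \<longlonglongrightarrow> \<bar>v \<bullet> w\<bar> / norm v"
      using tendsto_diff[OF A B] tendsto_add[OF A B] by simp_all
  qed
qed

lemma integral_split_cart:
  fixes f :: "real^'n \<Rightarrow> 'b::banach"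
  assumes "f integrable_on cbox a b"
  shows "integral (cbox a b) f
    = integral (cbox a b \<inter> {x. x$i \<le> c}) f + integral (cbox a b \<inter> {x. c \<le> x$i}) f"
  using integral_split[OF assms, of "axis i 1" c] by (simp add: inner_axis)

lemma integral_unit_cube_shift_axis:
  fixes g :: "real^'n \<Rightarrow> 'b::banach"
  assumes cont: "continuous_on UNIV g" and per: "\<And>x. g (x + axis i 1) = g x"
    and \<theta>: "0 \<le> \<theta>" "\<theta> \<le> 1"
  shows "integral (cbox 0 1) (\<lambda>x. g (x + \<theta> *\<^sub>R axis i 1)) = integral (cbox 0 1) g"
proof -
  txt \<open>Cut the cube at \<open>x$i = 1 - \<theta>\<close>: the shift moves the lower slab onto \<open>{x. \<theta> \<le> x$i}\<close>
    and, up to one period, the upper slab onto \<open>{x. x$i \<le> \<theta>}\<close>.\<close>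
  let ?e = "axis i 1 :: real^'n" and ?g\<theta> = "\<lambda>x. g (x + \<theta> *\<^sub>R axis i 1)"
  define lo hi :: "real \<Rightarrow> real^'n"
    where "lo t = (\<chi> j. if j = i then t else 0)" and "hi t = (\<chi> j. if j = i then t else 1)" for t
  have lower: "cbox 0 1 \<inter> {x. x$i \<le> t} = cbox 0 (hi t)"
    and upper: "cbox 0 1 \<inter> {x. t \<le> x$i} = cbox (lo t) 1" if "0 \<le> t" "t \<le> 1" for t
    using that by (auto simp: hi_def lo_def mem_box_cart split: if_splits) (metis order.trans)+
  have integrable: "f integrable_on cbox u w" if "continuous_on UNIV f" for u w and f :: "real^'n \<Rightarrow> 'b"
    using that by (auto intro: integrable_continuous continuous_on_subset)
  have "continuous_on UNIV ?g\<theta>"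
    by (intro continuous_on_compose2[OF cont] continuous_intros) auto
  then have "integral (cbox 0 1) ?g\<theta>
      = integral (cbox 0 (hi (1 - \<theta>))) ?g\<theta> + integral (cbox (lo (1 - \<theta>)) 1) ?g\<theta>"
    using integral_split_cart[OF integrable, of ?g\<theta> 0 1 i "1 - \<theta>"] \<theta> by (simp add: lower upper)
  also have "integral (cbox 0 (hi (1 - \<theta>))) ?g\<theta> = integral (cbox (lo \<theta>) 1) g"
  proof -
    have "lo \<theta> - \<theta> *\<^sub>R ?e = 0" "1 - \<theta> *\<^sub>R ?e = hi (1 - \<theta>)"
      by (simp_all add: lo_def hi_def axis_def vec_eq_iff)
    then show ?thesis
      using integral_shift_cbox[of "lo \<theta>" "\<theta> *\<^sub>R ?e" 1 g] by simp
  qed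
  also have "integral (cbox (lo (1 - \<theta>)) 1) ?g\<theta> = integral (cbox 0 (hi \<theta>)) g"
  proof -
    have "?g\<theta> x = g (x + (\<theta> - 1) *\<^sub>R ?e)" for x
      using per[of "x + (\<theta> - 1) *\<^sub>R ?e"] by (simp add: algebra_simps)
    moreover have "0 - (\<theta> - 1) *\<^sub>R ?e = lo (1 - \<theta>)" "hi \<theta> - (\<theta> - 1) *\<^sub>R ?e = 1"
      by (simp_all add: lo_def hi_def axis_def vec_eq_iff)
    ultimately show ?thesis
      using integral_shift_cbox[of 0 "(\<theta> - 1) *\<^sub>R ?e" "hi \<theta>" g] by simp
  qed
  also have "integral (cbox (lo \<theta>) 1) g + integral (cbox 0 (hi \<theta>)) g = integral (cbox 0 1) g"
    using integral_split_cart[OF integrable[OF cont], of 0 1 i \<theta>] \<theta> by (simp add: lower upper)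
  finally show ?thesis .
qed

lemma integral_unit_square_translate:
  fixes g :: "real^2 \<Rightarrow> 'b::banach"
  assumes cont: "continuous_on UNIV g" and per: "\<And>x z. int_vec z \<Longrightarrow> g (x + z) = g x"
  shows "integral (cbox 0 1) (\<lambda>x. g (x + c)) = integral (cbox 0 1) g"
proof -
  let ?e1 = "axis 1 1 :: real^2" and ?e2 = "axis 2 1 :: real^2"
  have per_axis: "g (x + axis i 1) = g x" for x i
    by (rule per) (auto simp: int_vec_def axis_def)
  define g2 where "g2 x = g (x + frac (c$2) *\<^sub>R ?e2)" for x
  have g2_cont: "continuous_on UNIV g2"
    unfolding g2_def by (intro continuous_on_compose2[OF cont] continuous_intros) auto
  define z :: "real^2" where "z = (\<chi> i. of_int \<lfloor>c$i\<rfloor>)"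
  have "x + c = (x + frac (c$1) *\<^sub>R ?e1 + frac (c$2) *\<^sub>R ?e2) + z" for x
    by (simp add: vec_eq_iff forall_2 axis_def frac_def z_def)
  moreover have "int_vec z"
    by (simp add: int_vec_def z_def)
  ultimately have "g (x + c) = g2 (x + frac (c$1) *\<^sub>R ?e1)" for x
    using per by (metis g2_def)
  then have "integral (cbox 0 1) (\<lambda>x. g (x + c)) = integral (cbox 0 1) (\<lambda>x. g2 (x + frac (c$1) *\<^sub>R ?e1))"
    by simp
  also have "\<dots> = integral (cbox 0 1) g2"
  proof (rule integral_unit_cube_shift_axis[OF g2_cont])
    show "g2 (x + ?e1) = g2 x" for x
      using per_axis[of "x + frac (c$2) *\<^sub>R ?e2" 1] by (simp add: g2_def algebra_simps)
  qed (simp_all add: frac_lt_1 less_imp_le)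
  also have "\<dots> = integral (cbox 0 1) g"
    unfolding g2_def
    by (rule integral_unit_cube_shift_axis[OF cont]) (simp_all add: per_axis frac_lt_1 less_imp_le)
  finally show ?thesis .
qed

lemma integral_I_lat:
  assumes v: "v \<noteq> 0" and cont: "continuous_on UNIV (\<lambda>(x, \<eta>). a x \<eta>)"
    and per: "\<And>x z \<eta>. int_vec z \<Longrightarrow> a (x + z) \<eta> = a x \<eta>"
  shows "integral (cbox 0 1) (\<lambda>x. I_lat v a x \<eta>) = integral (cbox 0 1) (\<lambda>x. a x \<eta>)"
proof -
  define L where "L = norm v"
  have L: "L > 0"
    using v by (simp add: L_def)
  let ?a\<^sub>t = "\<lambda>t x. a (x + (t / L) *\<^sub>R perp v) \<eta>"
  have slice_cont: "continuous_on UNIV (\<lambda>x. a x \<eta>)"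
    using continuous_on_compose2[OF cont continuous_on_Pair[OF continuous_on_id continuous_on_const]]
    by simp
  have translate_cont: "continuous_on S (\<lambda>(x, t). ?a\<^sub>t t x)" for S
  proof -
    have "continuous_on S (\<lambda>(x, t). (x + (t / L) *\<^sub>R perp v, \<eta>))"
      unfolding case_prod_unfold by (intro continuous_intros) (use L in auto)
    from continuous_on_compose2[OF cont this] show ?thesis
      by (simp add: case_prod_unfold)
  qed
  have "integral (cbox 0 1) (\<lambda>x. I_lat v a x \<eta>)
      = (1 / L) *\<^sub>R integral (cbox 0 1) (\<lambda>x. integral {0..L} (\<lambda>t. ?a\<^sub>t t x))"
    by (simp add: I_lat_def L_def scaleR_conv_of_real flip: integral_cmul)
  also have "integral (cbox 0 1) (\<lambda>x. integral {0..L} (\<lambda>t. ?a\<^sub>t t x))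
      = integral {0..L} (\<lambda>t. integral (cbox 0 1) (?a\<^sub>t t))"
    using integral_swap_continuous[where a=0 and b=1 and c=0 and d=L, OF translate_cont]
    by (simp add: cbox_interval)
  also have "\<dots> = integral {0..L} (\<lambda>t. integral (cbox 0 1) (\<lambda>x. a x \<eta>))"
    by (intro integral_cong integral_unit_square_translate[OF slice_cont] per)
  finally show ?thesis
    using L by simp
qed

lemma test_fun_continuous: "test_fun a \<Longrightarrow> continuous_on UNIV (\<lambda>(x, \<eta>). a x \<eta>)"
  unfolding test_fun_def smooth_fun_def by (metis dderiv.simps(1))

definition pairing_freq :: "real^2 \<Rightarrow> real \<Rightarrow> real \<Rightarrow> real^2 \<Rightarrow> real" where
  "pairing_freq v h \<epsilon> k = 2 * pi * h\<^sup>2 * (k \<bullet> v) / (\<epsilon> * norm v)"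

lemma pairing_freq_uminus [simp]: "pairing_freq (- v) h \<epsilon> k = - pairing_freq v h \<epsilon> k"
  by (simp add: pairing_freq_def)

lemma pairing_eq_integral:
  "pairing v h \<epsilon> k a = integral (cbox 0 1) (\<lambda>x. I_lat v a x (pairing_freq v h \<epsilon> k))"
proof -
  have phase: "cnj (ek k x) * (b * ek k x) = b" for b x
    by (simp add: ek_def cis_cnj mult.left_commute cis_mult flip: mult.assoc)
  have freq: "h * H_lat v ((2 * pi * h) *\<^sub>R k) / \<epsilon> = pairing_freq v h \<epsilon> k"
    by (simp add: H_lat_def pairing_freq_def power2_eq_square mult_ac)
  show ?thesis
    by (simp only: pairing_def torus_inner_def Op_on_ek_def freq phase)
qed

lemma pairing_tendsto_0:
  assumes a: "test_fun a"
    and escape: "filterlim (\<lambda>j. \<bar>pairing_freq v (h j) (\<epsilon> j) (k j)\<bar>) at_top sequentially"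
  shows "(\<lambda>j. pairing v (h j) (\<epsilon> j) (k j) a) \<longlonglongrightarrow> 0"
proof -
  from a obtain R where R: "\<And>x \<eta>. R < \<bar>\<eta>\<bar> \<Longrightarrow> a x \<eta> = 0"
    unfolding test_fun_def by blast
  have "eventually (\<lambda>j. R < \<bar>pairing_freq v (h j) (\<epsilon> j) (k j)\<bar>) sequentially"
    using escape by (simp add: filterlim_at_top_dense)
  then have "eventually (\<lambda>j. pairing v (h j) (\<epsilon> j) (k j) a = 0) sequentially"
    by eventually_elim (simp add: pairing_eq_integral I_lat_def R)
  then show ?thesis
    by (rule tendsto_eventually)
qed

lemma pairing_tendsto_integral:
  assumes v: "v \<noteq> 0" and a: "test_fun a"
    and freq: "(\<lambda>j. pairing_freq v (h j) (\<epsilon> j) (k j)) \<longlonglongrightarrow> \<eta>"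
  shows "(\<lambda>j. pairing v (h j) (\<epsilon> j) (k j) a) \<longlonglongrightarrow> integral (cbox 0 1) (\<lambda>x. a x \<eta>)"
proof -
  have cont: "continuous_on UNIV (\<lambda>(x, \<eta>). a x \<eta>)"
    using a by (rule test_fun_continuous)
  have "continuous_on (UNIV \<times> cbox 0 1) (\<lambda>(\<eta>, x). a x \<eta>)"
    using continuous_on_compose2[OF cont continuous_on_swap] by (simp add: case_prod_unfold)
  then have "isCont (\<lambda>\<eta>. integral (cbox 0 1) (\<lambda>x. a x \<eta>)) \<eta>"
    using integral_continuous_on_param continuous_on_eq_continuous_at by blast
  from isCont_tendsto_compose[OF this freq] show ?thesis
    using integral_I_lat[OF v cont] a
    by (simp add: pairing_eq_integral test_fun_def)
qed

lemma pairing_freq_escapes: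
  assumes w: "w \<noteq> 0" and v: "v \<noteq> 0" "v \<bullet> w \<noteq> 0"
    and unit: "eventually (\<lambda>j. norm (h j *\<^sub>R k j) = 1) sequentially"
    and aligned: "(\<lambda>j. h j * (k j \<bullet> perp v)) \<longlonglongrightarrow> 0"
    and scale: "filterlim (\<lambda>j. h j / \<epsilon> j) at_top sequentially"
  shows "filterlim (\<lambda>j. \<bar>pairing_freq w (h j) (\<epsilon> j) (k j)\<bar>) at_top sequentially"
proof -
  have "(\<lambda>j. \<bar>h j *\<^sub>R k j \<bullet> w\<bar>) \<longlonglongrightarrow> \<bar>v \<bullet> w\<bar> / norm v"
    using tendsto_abs_inner_aligned_unit[OF unit v(1)] aligned by simp
  then have "(\<lambda>j. 2 * pi * \<bar>h j *\<^sub>R k j \<bullet> w\<bar> / norm w) \<longlonglongrightarrow> 2 * pi * (\<bar>v \<bullet> w\<bar> / norm v) / norm w"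
    by (intro tendsto_intros) (simp_all add: w)
  moreover have "2 * pi * (\<bar>v \<bullet> w\<bar> / norm v) / norm w > 0"
    using v w by simp
  ultimately have "filterlim (\<lambda>j. 2 * pi * \<bar>h j *\<^sub>R k j \<bullet> w\<bar> / norm w * (h j / \<epsilon> j)) at_top sequentially"
    using scale by (rule filterlim_tendsto_pos_mult_at_top)
  moreover have "eventually (\<lambda>j. h j / \<epsilon> j > 0) sequentially"
    using scale by (simp add: filterlim_at_top_dense)
  then have "eventually (\<lambda>j. 2 * pi * \<bar>h j *\<^sub>R k j \<bullet> w\<bar> / norm w * (h j / \<epsilon> j)
      = \<bar>pairing_freq w (h j) (\<epsilon> j) (k j)\<bar>) sequentially"
  proof eventually_elim
    case (elim j)
    have freq_eq: "pairing_freq w (h j) (\<epsilon> j) (k j)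
        = 2 * pi * (h j *\<^sub>R k j \<bullet> w) / norm w * (h j / \<epsilon> j)"
      by (simp add: pairing_freq_def power2_eq_square mult_ac)
    show ?case
      unfolding freq_eq abs_mult abs_of_pos[OF elim] by (simp add: abs_mult)
  qed
  ultimately show ?thesis
    by (rule filterlim_cong[THEN iffD1, OF refl refl, rotated])
qed

lemma pairing_tendsto_0_transversal:
  assumes v0: "v0 \<noteq> 0" and v: "v \<noteq> 0" "v0 \<bullet> v \<noteq> 0" and a: "test_fun a"
    and k_inf: "filterlim (\<lambda>j. norm (k j)) at_top sequentially"
    and aligned: "(\<lambda>j. (k j \<bullet> perp v0) / norm (k j)) \<longlonglongrightarrow> 0"
    and h_def: "\<And>j. h j = 1 / norm (k j)"
    and eps_pos: "\<And>j. \<epsilon> j > 0" and eps_upper: "(\<lambda>j. \<epsilon> j / h j) \<longlonglongrightarrow> 0"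
  shows "(\<lambda>j. pairing v (h j) (\<epsilon> j) (k j) a) \<longlonglongrightarrow> 0"
proof -
  have k_nz: "eventually (\<lambda>j. norm (k j) > 0) sequentially"
    using filterlim_at_top_dense[THEN iffD1, OF k_inf] by blast
  then have "eventually (\<lambda>j. norm (h j *\<^sub>R k j) = 1) sequentially"
    by eventually_elim (simp add: h_def)
  moreover have "(\<lambda>j. h j * (k j \<bullet> perp v0)) \<longlonglongrightarrow> 0"
    using aligned by (simp add: h_def)
  moreover have "filterlim (\<lambda>j. h j / \<epsilon> j) at_top sequentially"
  proof -
    have "eventually (\<lambda>j. \<epsilon> j / h j > 0) sequentially"
      using k_nz by eventually_elim (simp add: h_def eps_pos)
    with filterlim_inverse_at_top[OF eps_upper] show ?thesis
      by simp
  qed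
  ultimately show ?thesis
    using pairing_tendsto_0[OF a pairing_freq_escapes[OF v(1) v0 v(2)]] by blast
qed

theorem proposition3p1:
  fixes v0 :: "real^2" and k :: "nat \<Rightarrow> real^2" and n m :: "nat \<Rightarrow> int"
    and h \<epsilon> :: "nat \<Rightarrow> real"
  assumes v0: "primitive_vec v0"
    and k_int: "\<And>j. int_vec (k j)"
    and k_dec: "\<And>j. k j = of_int (n j) *\<^sub>R v0 + of_int (m j) *\<^sub>R perp v0"
    and k_inf: "filterlim (\<lambda>j. norm (k j)) at_top sequentially"
    and h_def: "\<And>j. h j = 1 / norm (k j)"
    and eps_pos: "\<And>j. \<epsilon> j > 0"
    and eps_lower: "(\<lambda>j. (h j)\<^sup>2 / \<epsilon> j) \<longlonglongrightarrow> 0"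
    and eps_upper: "(\<lambda>j. \<epsilon> j / h j) \<longlonglongrightarrow> 0"
    and m_small: "(\<lambda>j. of_int (m j) * h j) \<longlonglongrightarrow> 0"
  shows
    "(\<forall>\<omega>::real. (\<lambda>j. 2 * pi * of_int (m j) * (h j)\<^sup>2 / \<epsilon> j) \<longlonglongrightarrow> \<omega> \<longrightarrow>
        (\<forall>a. test_fun a \<longrightarrow>
           (\<lambda>j. pairing (perp v0) (h j) (\<epsilon> j) (k j) a)
             \<longlonglongrightarrow> integral (cbox 0 1) (\<lambda>x. a x (\<omega> * norm v0))) \<and>
        (\<forall>v. primitive_vec v \<and> v \<noteq> perp v0 \<and> v \<noteq> - perp v0 \<longrightarrow>
           (\<forall>a. test_fun a \<longrightarrow> (\<lambda>j. pairing v (h j) (\<epsilon> j) (k j) a) \<longlonglongrightarrow> 0)))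
     \<and>
     (filterlim (\<lambda>j. 2 * pi * \<bar>of_int (m j)\<bar> * (h j)\<^sup>2 / \<epsilon> j) at_top sequentially \<longrightarrow>
        (\<forall>v. primitive_vec v \<longrightarrow>
           (\<forall>a. test_fun a \<longrightarrow> (\<lambda>j. pairing v (h j) (\<epsilon> j) (k j) a) \<longlonglongrightarrow> 0)))"
proof -
  have v0_nz: "v0 \<noteq> 0"
    using v0 by (rule primitive_vec_nonzero)
  have k_perp: "k j \<bullet> perp v0 = of_int (m j) * (norm v0)\<^sup>2" for j
    by (simp add: k_dec inner_add_left power2_norm_eq_inner)
  have "(\<lambda>j. (k j \<bullet> perp v0) / norm (k j)) \<longlonglongrightarrow> 0"
    using tendsto_mult_left_zero[OF m_small, of "(norm v0)\<^sup>2"] by (simp add: k_perp h_def)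
  note transversal = pairing_tendsto_0_transversal[OF v0_nz _ _ _ k_inf this h_def eps_pos eps_upper]
  have freq_perp: "pairing_freq (perp v0) (h j) (\<epsilon> j) (k j)
      = 2 * pi * of_int (m j) * (h j)\<^sup>2 / \<epsilon> j * norm v0" for j
    using v0_nz by (simp add: pairing_freq_def k_perp power2_eq_square)
  show ?thesis
  proof (intro conjI allI impI)
    fix \<omega> a assume \<omega>: "(\<lambda>j. 2 * pi * of_int (m j) * (h j)\<^sup>2 / \<epsilon> j) \<longlonglongrightarrow> \<omega>" and a: "test_fun a"
    have "(\<lambda>j. pairing_freq (perp v0) (h j) (\<epsilon> j) (k j)) \<longlonglongrightarrow> \<omega> * norm v0"
      unfolding freq_perp using \<omega> by (rule tendsto_mult_right)
    with v0_nz a show "(\<lambda>j. pairing (perp v0) (h j) (\<epsilon> j) (k j) a)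
        \<longlonglongrightarrow> integral (cbox 0 1) (\<lambda>x. a x (\<omega> * norm v0))"
      by (intro pairing_tendsto_integral) simp_all
  next
    fix v a assume "primitive_vec v \<and> v \<noteq> perp v0 \<and> v \<noteq> - perp v0" and "test_fun a"
    then show "(\<lambda>j. pairing v (h j) (\<epsilon> j) (k j) a) \<longlonglongrightarrow> 0"
      using transversal primitive_vec_nonzero primitive_vec_orthogonal[OF v0] by blast
  next
    fix v a assume div: "filterlim (\<lambda>j. 2 * pi * \<bar>of_int (m j)\<bar> * (h j)\<^sup>2 / \<epsilon> j) at_top sequentially"
      and v: "primitive_vec v" and a: "test_fun a"
    have "filterlim (\<lambda>j. norm v0 * (2 * pi * \<bar>of_int (m j)\<bar> * (h j)\<^sup>2 / \<epsilon> j)) at_top sequentially"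
      using v0_nz by (intro filterlim_tendsto_pos_mult_at_top[OF tendsto_const _ div]) simp
    moreover have "norm v0 * (2 * pi * \<bar>of_int (m j)\<bar> * (h j)\<^sup>2 / \<epsilon> j)
        = \<bar>pairing_freq (perp v0) (h j) (\<epsilon> j) (k j)\<bar>" for j
      using eps_pos[of j] by (simp add: freq_perp abs_mult)
    ultimately have "filterlim (\<lambda>j. \<bar>pairing_freq (perp v0) (h j) (\<epsilon> j) (k j)\<bar>) at_top sequentially"
      by simp
    then show "(\<lambda>j. pairing v (h j) (\<epsilon> j) (k j) a) \<longlonglongrightarrow> 0"
      using primitive_vec_orthogonal[OF v0 v] transversal[OF primitive_vec_nonzero[OF v] _ a]
        pairing_tendsto_0[OF a, of v] by (cases "v0 \<bullet> v = 0") auto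
  qed
qed

end
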